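(* Let $\Omega$ be a convex subset of $M^{\mathbb{R}}_{n\times n}(\mathbb{C})$ and let $\Omega_d$ be the set of matrices in $\Omega$ having $n$ distinct eigenvalues. Then $\Omega_d$ is dense in $\Omega$ if and only if $\Omega_d$ is nonempty.
   Context: $M^{\mathbb{R}}_{n\times n}(\mathbb{C})$ denotes the set of $n\times n$ complex matrices all of whose eigenvalues are real, with the topology induced by the Frobenius norm. *)

theory Defs
  imports "HOL-Analysis.Analysis"
begin

text \<open>n x n complex matrices are modelled as complex^'n^'n (n = CARD('n) >= 1).
  The norm on this type is the Euclidean norm of all entries, i.e. the Frobenius norm.\<close>

definition eigenvalue :: "complex^'n^'n \<Rightarrow> complex \<Rightarrow> bool" where
  "eigenvalue A c \<longleftrightarrow> (\<exists>v. v \<noteq> 0 \<and> A *v v = c *s v)"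

definition real_spectrum_matrices :: "(complex^'n^'n) set" where
  "real_spectrum_matrices = {A. \<forall>c. eigenvalue A c \<longrightarrow> Im c = 0}"

definition distinct_eig_part :: "(complex^'n^'n) set \<Rightarrow> (complex^'n^'n) set" where
  "distinct_eig_part \<Omega> = {A \<in> \<Omega>. card {c. eigenvalue A c} = CARD('n)}"

end

theory Submission
  imports Defs "HOL-Computational_Algebra.Field_as_Ring" "Subresultants.Subresultant_Gcd"
    "Jordan_Normal_Form.Char_Poly"
begin

text \<open>For \<open>A \<in> \<Omega>\<^sub>d\<close> and \<open>B \<in> \<Omega>\<close>, the entries of \<open>B + t (A - B)\<close> are polynomials in \<open>t\<close>,
  hence so is the discriminant of its characteristic polynomial. That polynomial does not vanish
  at \<open>t = 1\<close>, so it has only finitely many roots, and \<open>B + t (A - B)\<close> lies in \<open>\<Omega>\<^sub>d\<close> for all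
  but finitely many \<open>t \<in> (0, 1]\<close>. Letting \<open>t \<rightarrow> 0\<close> shows \<open>B \<in> closure \<Omega>\<^sub>d\<close>. The argument
  works for any convex set of complex matrices.\<close>

no_notation vec_index (infixl \<open>$\<close> 100)

lemma resultant_eq_0_iff_common_root:
  fixes p q :: "complex poly"
  assumes "p \<noteq> 0"
  shows "resultant p q = 0 \<longleftrightarrow> (\<exists>a. poly p a = 0 \<and> poly q a = 0)"
proof -
  let ?g = "gcd p q"
  have "?g \<noteq> 0" using assms by simp
  then have "degree ?g \<noteq> 0 \<longleftrightarrow> (\<exists>a. poly ?g a = 0)"
    using fundamental_theorem_of_algebra constant_degree
    by (metis degree_eq_zeroE poly_const_conv pCons_0_0)
  moreover have "poly ?g a = 0 \<longleftrightarrow> poly p a = 0 \<and> poly q a = 0" for a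
    by (simp add: poly_eq_0_iff_dvd)
  ultimately show ?thesis by (simp add: resultant_0_gcd)
qed

text \<open>For monic \<open>p\<close> this is the discriminant of \<open>p\<close> up to sign.\<close>
definition discr :: "'a::idom poly \<Rightarrow> 'a" where
  "discr p = resultant p (pderiv p)"

lemma card_roots_eq_degree_iff_discr:
  fixes p :: "complex poly"
  assumes "p \<noteq> 0"
  shows "card {a. poly p a = 0} = degree p \<longleftrightarrow> discr p \<noteq> 0"
  using assms by (simp add: discr_def resultant_eq_0_iff_common_root rsquarefree_roots
      flip: rsquarefree_card_degree)

definition cart_enum :: "nat \<Rightarrow> 'n::finite" where
  "cart_enum = (SOME h. bij_betw h {0..<CARD('n)} UNIV)"

lemma bij_betw_cart_enum: "bij_betw cart_enum {0..<CARD('n::finite)} (UNIV :: 'n set)"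
  unfolding cart_enum_def using ex_bij_betw_nat_finite[of "UNIV :: 'n set"]
  by (rule someI_ex) simp

definition vec_of_cart :: "'a^'n \<Rightarrow> 'a vec" where
  "vec_of_cart v = vec CARD('n) (\<lambda>i. v $ cart_enum i)"

definition mat_of_cart :: "'a^'n^'n \<Rightarrow> 'a mat" where
  "mat_of_cart A = mat CARD('n) CARD('n) (\<lambda>(i, j). A $ cart_enum i $ cart_enum j)"

lemma mat_of_cart_carrier: "mat_of_cart (A :: 'a^'n^'n) \<in> carrier_mat CARD('n) CARD('n)"
  by (simp add: mat_of_cart_def)

lemma cart_enum_surj:
  fixes k :: "'n::finite"
  obtains i where "i < CARD('n)" "cart_enum i = k"
proof -
  have "k \<in> cart_enum ` {0..<CARD('n)}"
    using bij_betw_imp_surj_on[OF bij_betw_cart_enum[where 'n='n]] by simp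
  then show ?thesis using that by auto
qed

lemma vec_of_cart_inject:
  fixes u v :: "'a^'n"
  shows "vec_of_cart u = vec_of_cart v \<longleftrightarrow> u = v"
proof
  assume eq: "vec_of_cart u = vec_of_cart v"
  show "u = v"
  proof (rule Finite_Cartesian_Product.vec_eq_iff[THEN iffD2], rule allI)
    fix k :: 'n
    obtain i where i: "i < CARD('n)" "cart_enum i = k"
      by (rule cart_enum_surj[of k])
    have "vec_index (vec_of_cart u) i = vec_index (vec_of_cart v) i"
      using eq by simp
    then show "u $ k = v $ k"
      using i by (simp add: vec_of_cart_def)
  qed
qed simp

lemma range_vec_of_cart: "range (vec_of_cart :: 'a^'n \<Rightarrow> 'a vec) = carrier_vec CARD('n)"
proof (intro equalityI subsetI)
  fix w :: "'a vec"
  assume w: "w \<in> carrier_vec CARD('n)"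
  define v :: "'a^'n" where "v = (\<chi> k. vec_index w (inv_into {0..<CARD('n)} cart_enum k))"
  have "vec_index (vec_of_cart v) i = vec_index w i" if "i < CARD('n)" for i
    using that bij_betw_inv_into_left[OF bij_betw_cart_enum[where 'n='n], of i]
    by (simp add: vec_of_cart_def v_def)
  then have "vec_of_cart v = w"
    using w by (intro eq_vecI) (simp_all add: vec_of_cart_def)
  then show "w \<in> range (vec_of_cart :: 'a^'n \<Rightarrow> 'a vec)" by blast
qed (auto simp: vec_of_cart_def)

lemma mat_of_cart_mult_vec:
  fixes A :: "'a::comm_semiring_1^'n^'n"
  shows "mat_of_cart A *\<^sub>v vec_of_cart v = vec_of_cart (A *v v)"
proof (rule eq_vecI)
  fix i assume "i < dim_vec (vec_of_cart (A *v v))"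
  then have i: "i < CARD('n)" by (simp add: vec_of_cart_def)
  have "vec_index (mat_of_cart A *\<^sub>v vec_of_cart v) i =
      (\<Sum>j\<in>{0..<CARD('n)}. A $ cart_enum i $ cart_enum j * v $ cart_enum j)"
    using i by (simp add: mat_of_cart_def vec_of_cart_def scalar_prod_def)
  also have "\<dots> = (\<Sum>j\<in>UNIV. A $ cart_enum i $ j * v $ j)"
    by (rule sum.reindex_bij_betw[OF bij_betw_cart_enum])
  also have "\<dots> = vec_index (vec_of_cart (A *v v)) i"
    using i by (simp add: vec_of_cart_def matrix_vector_mult_def)
  finally show "vec_index (mat_of_cart A *\<^sub>v vec_of_cart v) i = vec_index (vec_of_cart (A *v v)) i" .
qed (simp add: mat_of_cart_def vec_of_cart_def)

lemma eigenvalue_iff_eigenvalue_mat_of_cart: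
  fixes A :: "complex^'n^'n"
  shows "Defs.eigenvalue A c \<longleftrightarrow> Char_Poly.eigenvalue (mat_of_cart A) c"
proof -
  have smult: "c \<cdot>\<^sub>v vec_of_cart v = vec_of_cart (c *s v)" for v :: "complex^'n"
    by (intro eq_vecI) (simp_all add: vec_of_cart_def)
  have zero: "0\<^sub>v CARD('n) = vec_of_cart (0 :: complex^'n)"
    by (intro eq_vecI) (simp_all add: vec_of_cart_def)
  have "Defs.eigenvalue A c \<longleftrightarrow> (\<exists>v :: complex^'n. vec_of_cart v \<noteq> 0\<^sub>v CARD('n) \<and>
      mat_of_cart A *\<^sub>v vec_of_cart v = c \<cdot>\<^sub>v vec_of_cart v)"
    by (simp only: Defs.eigenvalue_def mat_of_cart_mult_vec zero smult vec_of_cart_inject)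
  also have "\<dots> \<longleftrightarrow> (\<exists>w \<in> range (vec_of_cart :: complex^'n \<Rightarrow> complex vec).
      w \<noteq> 0\<^sub>v CARD('n) \<and> mat_of_cart A *\<^sub>v w = c \<cdot>\<^sub>v w)"
    by blast
  also have "\<dots> \<longleftrightarrow> Char_Poly.eigenvalue (mat_of_cart A) c"
    by (auto simp: range_vec_of_cart Char_Poly.eigenvalue_def eigenvector_def mat_of_cart_def)
  finally show ?thesis .
qed

lemma card_eigenvalues_iff_discr:
  fixes A :: "complex^'n^'n"
  shows "card {c. Defs.eigenvalue A c} = CARD('n) \<longleftrightarrow> discr (char_poly (mat_of_cart A)) \<noteq> 0"
proof -
  have monic: "degree (char_poly (mat_of_cart A)) = CARD('n)"
    "coeff (char_poly (mat_of_cart A)) CARD('n) = 1"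
    using degree_monic_char_poly[OF mat_of_cart_carrier] by auto
  then have "char_poly (mat_of_cart A) \<noteq> 0" by auto
  moreover have "{c. Defs.eigenvalue A c} = {c. poly (char_poly (mat_of_cart A)) c = 0}"
    by (simp add: eigenvalue_iff_eigenvalue_mat_of_cart eigenvalue_root_char_poly[OF mat_of_cart_carrier])
  ultimately show ?thesis
    using card_roots_eq_degree_iff_discr monic(1) by metis
qed

lemma poly_discr_char_poly:
  fixes M :: "'a::field_char_0 poly mat"
  assumes M: "M \<in> carrier_mat n n"
  shows "poly (discr (char_poly M)) a = discr (char_poly (map_mat (\<lambda>p. poly p a) M))"
proof -
  let ?ev = "\<lambda>p. poly p a"
  have hom: "char_poly (map_mat ?ev M) = map_poly ?ev (char_poly M)"
    by (rule poly_hom.char_poly_hom[OF M])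
  have deg: "degree (char_poly M) = n" "degree (map_poly ?ev (char_poly M)) = n"
    using degree_monic_char_poly[OF M] degree_monic_char_poly[of "map_mat ?ev M"] M hom
    by auto
  then have "degree (map_poly ?ev (pderiv (char_poly M))) = degree (pderiv (char_poly M))"
    by (simp add: poly_hom.map_poly_pderiv degree_pderiv)
  then show ?thesis
    using poly_hom.resultant_map_poly[of a "char_poly M" "pderiv (char_poly M)"] deg hom
    by (simp add: discr_def poly_hom.map_poly_pderiv)
qed

lemma discr_char_poly_on_line:
  fixes B D :: "complex^'n^'n"
  obtains r where "\<And>t. poly r (of_real t) = discr (char_poly (mat_of_cart (B + t *\<^sub>R D)))"
proof
  define M :: "complex poly mat" where
    "M = mat CARD('n) CARD('n)
      (\<lambda>(i, j). [:B $ cart_enum i $ cart_enum j, D $ cart_enum i $ cart_enum j:])"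
  fix t :: real
  have M: "M \<in> carrier_mat CARD('n) CARD('n)"
    by (simp add: M_def)
  have "map_mat (\<lambda>p. poly p (of_real t)) M = mat_of_cart (B + t *\<^sub>R D)"
    by (rule eq_matI) (simp_all add: M_def mat_of_cart_def scaleR_conv_of_real[where 'a=complex] mult.commute)
  then show "poly (discr (char_poly M)) (of_real t) = discr (char_poly (mat_of_cart (B + t *\<^sub>R D)))"
    using poly_discr_char_poly[OF M] by simp
qed

lemma finite_discr_char_poly_zeros_on_line:
  fixes B D :: "complex^'n^'n"
  assumes "discr (char_poly (mat_of_cart (B + s *\<^sub>R D))) \<noteq> 0"
  shows "finite {t. discr (char_poly (mat_of_cart (B + t *\<^sub>R D))) = 0}"
proof -
  obtain r where r: "\<And>t. poly r (of_real t) = discr (char_poly (mat_of_cart (B + t *\<^sub>R D)))"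
    using discr_char_poly_on_line by blast
  have "r \<noteq> 0"
    using r[of s] assms by auto
  then have "finite (of_real -` {z. poly r z = 0} :: real set)"
    by (intro finite_vimageI poly_roots_finite) (simp_all add: inj_of_real)
  then show ?thesis
    by (simp add: vimage_def flip: r)
qed

lemma start_in_closure_segment_cofinite:
  fixes a b :: "'a::real_normed_vector"
  assumes "finite {t. \<not> P (a + t *\<^sub>R (b - a))}"
  shows "a \<in> closure {x \<in> closed_segment a b. P x}"
proof (unfold closure_approachable, intro allI impI)
  fix e :: real
  assume "e > 0"
  have pos: "norm (b - a) + 1 > 0"
    by (simp add: add_nonneg_pos)
  define m where "m = min 1 (e / (norm (b - a) + 1))"
  have "m > 0"
    using \<open>e > 0\<close> pos by (simp add: m_def)
  then have "infinite ({0<..<m} - {t. \<not> P (a + t *\<^sub>R (b - a))})"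
    using assms by (simp add: Diff_infinite_finite)
  then obtain t where "t \<in> {0<..<m} - {t. \<not> P (a + t *\<^sub>R (b - a))}"
    by (metis infinite_imp_nonempty ex_in_conv)
  then have t: "0 < t" "t < m" "P (a + t *\<^sub>R (b - a))"
    by auto
  have "t \<le> 1"
    using t by (simp add: m_def)
  then have "a + t *\<^sub>R (b - a) \<in> closed_segment a b"
    unfolding in_segment(1) using t(1) by (intro exI[of _ t]) (simp add: algebra_simps)
  moreover have "t * norm (b - a) < e"
  proof -
    have "t * norm (b - a) \<le> t * (norm (b - a) + 1)"
      using t by simp
    also have "\<dots> < e / (norm (b - a) + 1) * (norm (b - a) + 1)"
      using t pos by (intro mult_strict_right_mono) (simp_all add: m_def)
    also have "\<dots> = e"
      using pos by simp
    finally show ?thesis .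
  qed
  then have "dist (a + t *\<^sub>R (b - a)) a < e"
    using t by (simp add: dist_norm)
  ultimately show "\<exists>x \<in> {x \<in> closed_segment a b. P x}. dist x a < e"
    using t by blast
qed

theorem theorem4p3:
  fixes \<Omega> :: "(complex^'n^'n) set"
  assumes "convex \<Omega>"
    and "\<Omega> \<subseteq> real_spectrum_matrices"
    and "\<Omega> \<noteq> {}"
  shows "\<Omega> \<subseteq> closure (distinct_eig_part \<Omega>) \<longleftrightarrow> distinct_eig_part \<Omega> \<noteq> {}"
proof
  assume "\<Omega> \<subseteq> closure (distinct_eig_part \<Omega>)"
  then show "distinct_eig_part \<Omega> \<noteq> {}"
    using assms(3) by auto
next
  assume "distinct_eig_part \<Omega> \<noteq> {}"
  then obtain A where A: "A \<in> \<Omega>" "discr (char_poly (mat_of_cart A)) \<noteq> 0"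
    by (auto simp: distinct_eig_part_def card_eigenvalues_iff_discr)
  show "\<Omega> \<subseteq> closure (distinct_eig_part \<Omega>)"
  proof
    fix B
    assume B: "B \<in> \<Omega>"
    have "finite {t. discr (char_poly (mat_of_cart (B + t *\<^sub>R (A - B)))) = 0}"
      using A(2) by (intro finite_discr_char_poly_zeros_on_line[where s = 1]) simp
    then have "B \<in> closure {X \<in> closed_segment B A. card {c. Defs.eigenvalue X c} = CARD('n)}"
      by (intro start_in_closure_segment_cofinite) (simp add: card_eigenvalues_iff_discr)
    also have "\<dots> \<subseteq> closure (distinct_eig_part \<Omega>)"
      using convex_contains_segment assms(1) A(1) B
      by (intro closure_mono) (auto simp: distinct_eig_part_def)
    finally show "B \<in> closure (distinct_eig_part \<Omega>)" .
  qed
qed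

end
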